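(* Let $\alpha\in(0,2)$. There exists a sequence $\{f_n\}_{n\ge1}\subset W^{1,\infty}(\mathbb{T}^2)$ of zero-average functions, bounded in $L^1(\mathbb{T}^2)$, and a constant $C>0$ such that $$\sup_{n\ge1}\mathbb{M}_{f_n}(r)\le Cr^\alpha\qquad\forall r\in(0,1),$$ and $$\lim_{n\to\infty}\|f_n\|_{L^2}=\infty,\qquad 0<\liminf_{n\to\infty}S_n\le\limsup_{n\to\infty}S_n<\infty,\qquad\text{where } S_n:=\frac{\|f_n\|_{L^2}^{\frac{4-\alpha}{2-\alpha}}}{\|\nabla f_n\|_{L^2}}.$$
   Context: $\mathbb{T}^2$ is the two-dimensional flat torus. For $f\in L^1(\mathbb{T}^2)$, $\mathbb{M}_f(r):=\sup_{x\in\mathbb{T}^2}\int_{B_r(x)}|f(y)|\,dy$, where $B_r(x)$ is the ball of radius $r$ in $\mathbb{T}^2$. *)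

theory Defs
  imports "HOL-Analysis.Analysis"
begin

text \<open>The flat torus T^2 is modelled as R^2 / Z^2: functions on T^2 are
  Z^2-periodic functions on R^2, and integrals over T^2 are integrals over
  the unit cell [0,1]^2.\<close>

definition cell :: "(real^2) set" where
  "cell = cbox 0 One"

definition periodic2 :: "(real^2 \<Rightarrow> 'b) \<Rightarrow> bool" where
  "periodic2 f \<longleftrightarrow> (\<forall>x i. f (x + axis i 1) = f x)"

definition tdist :: "real^2 \<Rightarrow> real^2 \<Rightarrow> real" where
  "tdist x y = Inf {norm (x - y - k) | k :: real^2. \<forall>i. k $ i \<in> \<int>}"

definition tball :: "real^2 \<Rightarrow> real \<Rightarrow> (real^2) set" where
  "tball x r = {y \<in> cell. tdist x y < r}"

definition tint :: "(real^2 \<Rightarrow> real) \<Rightarrow> real" where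
  "tint f = integral\<^sup>L (lebesgue_on cell) f"

definition L1norm :: "(real^2 \<Rightarrow> real) \<Rightarrow> real" where
  "L1norm f = tint (\<lambda>y. \<bar>f y\<bar>)"

definition L2norm :: "(real^2 \<Rightarrow> real) \<Rightarrow> real" where
  "L2norm f = sqrt (tint (\<lambda>y. (f y)\<^sup>2))"

definition L2norm_vec :: "(real^2 \<Rightarrow> real^2) \<Rightarrow> real" where
  "L2norm_vec G = sqrt (tint (\<lambda>y. (norm (G y))\<^sup>2))"

definition maxint :: "(real^2 \<Rightarrow> real) \<Rightarrow> real \<Rightarrow> real" where
  "maxint f r = (SUP x. integral\<^sup>L (lebesgue_on (tball x r)) (\<lambda>y. \<bar>f y\<bar>))"

definition ess_bounded :: "(real^2 \<Rightarrow> real) \<Rightarrow> bool" where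
  "ess_bounded f \<longleftrightarrow> (\<exists>B. AE y in lebesgue_on cell. \<bar>f y\<bar> \<le> B)"

definition C1_periodic :: "(real^2 \<Rightarrow> real) \<Rightarrow> (2 \<Rightarrow> real^2 \<Rightarrow> real) \<Rightarrow> bool" where
  "C1_periodic \<phi> P \<longleftrightarrow> periodic2 \<phi> \<and>
     (\<forall>x. (\<phi> has_derivative (\<lambda>h. \<Sum>i\<in>UNIV. P i x * h $ i)) (at x)) \<and>
     (\<forall>i. continuous_on UNIV (P i))"

definition weak_gradient :: "(real^2 \<Rightarrow> real) \<Rightarrow> (real^2 \<Rightarrow> real^2) \<Rightarrow> bool" where
  "weak_gradient f G \<longleftrightarrow>
     (\<forall>i. integrable (lebesgue_on cell) (\<lambda>y. G y $ i)) \<and>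
     (\<forall>\<phi> P. C1_periodic \<phi> P \<longrightarrow>
        (\<forall>i. tint (\<lambda>y. f y * P i y) = - tint (\<lambda>y. G y $ i * \<phi> y)))"

definition W1inf :: "(real^2 \<Rightarrow> real) \<Rightarrow> (real^2 \<Rightarrow> real^2) \<Rightarrow> bool" where
  "W1inf f G \<longleftrightarrow> periodic2 f \<and> periodic2 G \<and>
     f \<in> borel_measurable lebesgue \<and> G \<in> borel_measurable lebesgue \<and>
     ess_bounded f \<and> (\<forall>i. ess_bounded (\<lambda>y. G y $ i)) \<and> weak_gradient f G"

end

(* The functions are tensor products f(x, y) = v(x) v(y), where v is a train of N pulses per
   unit length, each a copy of the mean-zero profile psi = Phi' raised to height 1/delta and
   compressed to width delta/N, with delta = N^(1 - 2/alpha). On an interval of length L,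
   the integral of |v| is at most min (L/delta, L + 2/N) <= 6 L^(alpha/2), so every ball of
   radius r carries mass at most C r^alpha. On the other hand ||f||_2 = ||psi||_2^2 / delta
   tends to infinity, and ||grad f||_2 = (N/delta^2) sqrt (2 ||psi||_2^2 ||psi'||_2^2); the
   choice of delta makes the quotient S_n independent of n. *)

theory Submission
  imports Defs
begin

lemma vector_2_eta [simp]: "vector [y$1, y$2] = (y :: 'a :: zero ^ 2)"
  by (simp add: vec_eq_iff forall_2)

lemma vector_2_eq_axis: "(vector [s, t] :: real^2) = s *\<^sub>R axis 1 1 + t *\<^sub>R axis 2 (1 :: real)"
  by (simp add: vec_eq_iff forall_2 axis_def)

lemma One_nth [simp]: "(One :: real ^ 'n) $ i = 1"
  by (simp add: cart_eq_inner_axis inner_sum_Basis)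

lemma continuous_on_vector_2 [continuous_intros]:
  "continuous_on S f \<Longrightarrow> continuous_on S g \<Longrightarrow> continuous_on S (\<lambda>x. vector [f x, g x] :: real^2)"
  unfolding vector_2_eq_axis by (intro continuous_intros)

lemma image_vector_2_cbox:
  "(\<lambda>p. vector [fst p, snd p] :: real^2) ` cbox (a, c) (b, d) = cbox (vector [a, c]) (vector [b, d])"
proof -
  have "y \<in> (\<lambda>p. vector [fst p, snd p]) ` cbox (a, c) (b, d)" if "y \<in> cbox (vector [a, c]) (vector [b, d])" for y :: "real^2"
    using that by (intro image_eqI[of _ _ "(y$1, y$2)"]) (auto simp: mem_box_cart cbox_Pair_eq forall_2)
  then show ?thesis
    by (auto simp: mem_box_cart cbox_Pair_eq forall_2)
qed

lemma measure_cbox_vector_2: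
  "measure lborel (cbox (vector [a, c]) (vector [b, d] :: real^2)) = measure lborel (cbox a b) * measure lborel (cbox c d)"
proof (cases "a \<le> b \<and> c \<le> d")
  case True
  then have "cbox (vector [a, c]) (vector [b, d] :: real^2) \<noteq> {}"
    by (simp add: interval_ne_empty_cart forall_2)
  then show ?thesis
    using True by (simp add: content_cbox_cart UNIV_2)
next
  case False
  then have "cbox (vector [a, c]) (vector [b, d] :: real^2) = {}"
    by (auto simp: interval_eq_empty_cart intro: exI[of _ 1] exI[of _ 2])
  then show ?thesis
    using False by auto
qed

lemma integral_cbox_cart2_iterated:
  fixes F :: "real^2 \<Rightarrow> real"
  assumes "continuous_on (cbox a b) F"
  shows "integral (cbox a b) F = integral {a$1..b$1} (\<lambda>s. integral {a$2..b$2} (\<lambda>t. F (vector [s, t])))"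
proof -
  let ?g = "\<lambda>p. vector [fst p, snd p] :: real^2"
  let ?h = "\<lambda>y::real^2. (y$1, y$2)"
  have image_g: "\<exists>w z. ?g ` cbox u v = cbox w z" for u v
    using image_vector_2_cbox[of "fst u" "snd u" "fst v" "snd v"] by auto
  have image_h: "?h ` cbox u v = cbox (u$1, u$2) (v$1, v$2)" for u v :: "real^2"
  proof -
    have "?h ` (?g ` cbox (u$1, u$2) (v$1, v$2)) = cbox (u$1, u$2) (v$1, v$2)"
      by (simp add: image_comp o_def)
    then show ?thesis
      by (simp only: image_vector_2_cbox vector_2_eta)
  qed
  have content_g: "measure lborel (?g ` cbox u v) = 1 * measure lborel (cbox u v)" for u v
    using image_vector_2_cbox[of "fst u" "snd u" "fst v" "snd v"]
    by (simp add: measure_cbox_vector_2 content_Pair[of "fst u" "snd u" "fst v" "snd v", simplified])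
  have continuous_g: "continuous (at x) ?g" for x
    unfolding vector_2_eq_axis by (intro continuous_intros)
  have "((\<lambda>p. F (?g p)) has_integral (1/1) *\<^sub>R integral (cbox a b) F) (?h ` cbox a b)"
  proof (rule has_integral_twiddle[where r=1])
    show "(F has_integral integral (cbox a b) F) (cbox a b)"
      using integrable_continuous[OF assms] by blast
    show "\<And>x. ?h (?g x) = x" "\<And>x. ?g (?h x) = x" "0 < (1::real)"
      by simp_all
    show "\<And>u v. \<exists>w z. ?h ` cbox u v = cbox w z"
      using image_h by blast
  qed (fact continuous_g image_g content_g)+
  then have "integral (cbox (a$1, a$2) (b$1, b$2)) (\<lambda>p. F (?g p)) = integral (cbox a b) F"
    unfolding image_h by (simp add: integral_unique)
  moreover have "continuous_on (cbox (a$1, a$2) (b$1, b$2)) (\<lambda>p. F (?g p))"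
    by (rule continuous_on_compose2[OF assms])
       (auto intro!: continuous_intros simp: image_vector_2_cbox)
  ultimately show ?thesis
    using integral_prod_continuous[of "a$1" "a$2" "b$1" "b$2" "\<lambda>p. F (?g p)"] by (simp add: cbox_interval)
qed

lemma mem_cell: "y \<in> cell \<longleftrightarrow> (\<forall>i. 0 \<le> y$i \<and> y$i \<le> 1)"
  unfolding cell_def mem_box_cart by (simp only: One_nth zero_index)

lemma tint_eq_integral:
  assumes "continuous_on cell F"
  shows "tint F = integral cell F"
  unfolding tint_def
  by (rule lebesgue_integral_eq_integral) (use assms continuous_imp_integrable in \<open>auto simp: cell_def\<close>)

lemma tint_add:
  assumes "continuous_on cell F" "continuous_on cell G"
  shows "tint (\<lambda>y. F y + G y) = tint F + tint G"
proof -
  have "integral cell (\<lambda>y. F y + G y) = integral cell F + integral cell G"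
    using assms unfolding cell_def by (intro integral_add integrable_continuous)
  then show ?thesis
    using assms by (simp add: tint_eq_integral continuous_on_add)
qed

lemma tint_iterated:
  assumes "continuous_on cell F"
  shows "tint F = integral {0..1} (\<lambda>s. integral {0..1} (\<lambda>t. F (vector [s, t])))"
  using integral_cbox_cart2_iterated[of 0 One F] assms
  unfolding One_nth zero_index by (simp add: tint_eq_integral cell_def)

lemma tint_iterated_swap:
  assumes "continuous_on cell F"
  shows "tint F = integral {0..1} (\<lambda>t. integral {0..1} (\<lambda>s. F (vector [s, t])))"
proof -
  have "continuous_on (cbox (0, 0) (1, 1)) (\<lambda>(s, t). F (vector [s, t]))"
    unfolding case_prod_beta'
    by (rule continuous_on_compose2[OF assms])
       (auto intro!: continuous_intros simp: mem_cell forall_2 cbox_Pair_eq)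
  from integral_swap_continuous[OF this] show ?thesis
    unfolding tint_iterated[OF assms] by (simp add: cbox_interval)
qed

lemma has_integral_real_derivative:
  fixes F f :: "real \<Rightarrow> real"
  assumes "a \<le> b" "\<And>x. (F has_real_derivative f x) (at x)"
  shows "(f has_integral F b - F a) {a..b}"
  using assms by (intro fundamental_theorem_of_calculus)
    (simp_all add: has_real_derivative_iff_has_vector_derivative[symmetric] has_field_derivative_at_within)

lemma has_real_derivative_along_axis:
  assumes "\<And>x. (\<phi> has_derivative (\<lambda>h. \<Sum>j\<in>UNIV. P j x * h $ j)) (at x)"
  shows "((\<lambda>s. \<phi> (y + s *\<^sub>R axis i 1)) has_real_derivative P i (y + s *\<^sub>R axis i 1)) (at s)"
proof -
  have "((\<lambda>s. y + s *\<^sub>R axis i 1) has_derivative (\<lambda>h. h *\<^sub>R axis i 1)) (at s)"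
    by (auto intro!: derivative_eq_intros)
  from has_derivative_compose[OF this assms]
  have "((\<lambda>s. \<phi> (y + s *\<^sub>R axis i 1)) has_derivative (\<lambda>h. \<Sum>j\<in>UNIV. P j (y + s *\<^sub>R axis i 1) * (h *\<^sub>R axis i 1) $ j)) (at s)"
    by (simp add: o_def)
  moreover have "(\<lambda>h. \<Sum>j\<in>UNIV. P j (y + s *\<^sub>R axis i 1) * (h *\<^sub>R axis i (1::real)) $ j) = (*) (P i (y + s *\<^sub>R axis i 1))"
    by (simp add: axis_def if_distrib[of "\<lambda>x. _ * x"] cong: if_cong)
  ultimately show ?thesis
    by (simp add: has_field_derivative_def)
qed

lemma tint_eq_0_if_axis_integrals_eq_0:
  assumes "continuous_on cell F" "\<And>y. integral {0..1} (\<lambda>s. F (y + s *\<^sub>R axis i 1)) = 0"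
  shows "tint F = 0"
proof (cases "i = 1")
  case True
  have "vector [0, t] + s *\<^sub>R axis i 1 = vector [s, t]" for s t :: real
    using True by (simp add: vec_eq_iff forall_2 axis_def)
  then show ?thesis
    using assms(2)[of "vector [0, _]"] by (simp add: tint_iterated_swap[OF assms(1)])
next
  case False
  then have "vector [s, 0] + t *\<^sub>R axis i 1 = vector [s, t]" for s t :: real
    using exhaust_2[of i] by (simp add: vec_eq_iff forall_2 axis_def)
  then show ?thesis
    using assms(2)[of "vector [_, 0]"] by (simp add: tint_iterated[OF assms(1)])
qed

lemma tint_partial_derivative_eq_0:
  assumes "C1_periodic g D"
  shows "tint (D i) = 0"
proof (rule tint_eq_0_if_axis_integrals_eq_0)
  have deriv: "\<And>x. (g has_derivative (\<lambda>h. \<Sum>j\<in>UNIV. D j x * h $ j)) (at x)"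
    and continuous: "continuous_on UNIV (D i)" and periodic: "periodic2 g"
    using assms by (auto simp: C1_periodic_def)
  show "continuous_on cell (D i)"
    using continuous by (rule continuous_on_subset) simp
  fix y
  have "((\<lambda>s. D i (y + s *\<^sub>R axis i 1)) has_integral g (y + 1 *\<^sub>R axis i 1) - g (y + 0 *\<^sub>R axis i 1)) {0..1}"
    by (rule has_integral_real_derivative) (simp_all add: has_real_derivative_along_axis[OF deriv])
  then show "integral {0..1} (\<lambda>s. D i (y + s *\<^sub>R axis i 1)) = 0"
    using periodic by (simp add: periodic2_def integral_unique)
qed

lemma continuous_on_if_C1_periodic:
  assumes "C1_periodic f P"
  shows "continuous_on S f" "continuous_on S (P i)"
proof -
  show "continuous_on S (P i)"
    using assms continuous_on_subset unfolding C1_periodic_def by blast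
  show "continuous_on S f"
  proof (rule continuous_at_imp_continuous_on, rule ballI)
    fix x
    show "isCont f x"
      using assms unfolding C1_periodic_def by (blast intro: has_derivative_continuous)
  qed
qed

lemma C1_periodic_mult:
  assumes "C1_periodic f P" "C1_periodic g Q"
  shows "C1_periodic (\<lambda>x. f x * g x) (\<lambda>i x. f x * Q i x + P i x * g x)"
proof -
  have df: "\<And>x. (f has_derivative (\<lambda>h. \<Sum>i\<in>UNIV. P i x * h $ i)) (at x)"
    and dg: "\<And>x. (g has_derivative (\<lambda>h. \<Sum>i\<in>UNIV. Q i x * h $ i)) (at x)"
    using assms by (auto simp: C1_periodic_def)
  have "((\<lambda>x. f x * g x) has_derivative (\<lambda>h. \<Sum>i\<in>UNIV. (f x * Q i x + P i x * g x) * h $ i)) (at x)" for x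
    using has_derivative_mult[OF df dg, of x]
    by (simp add: sum_distrib_left sum_distrib_right sum.distrib algebra_simps)
  moreover have "continuous_on UNIV (\<lambda>x. f x * Q i x + P i x * g x)" for i
    using continuous_on_if_C1_periodic[OF assms(1)] continuous_on_if_C1_periodic[OF assms(2)]
    by (intro continuous_intros)
  ultimately show ?thesis
    using assms by (simp add: C1_periodic_def periodic2_def)
qed

lemma weak_gradient_if_C1_periodic:
  assumes "C1_periodic f (\<lambda>i y. G y $ i)"
  shows "weak_gradient f G"
  unfolding weak_gradient_def
proof (intro conjI allI impI)
  show "integrable (lebesgue_on cell) (\<lambda>y. G y $ i)" for i
    unfolding cell_def by (rule continuous_imp_integrable) (rule continuous_on_if_C1_periodic[OF assms])
  fix \<phi> P i
  assume \<phi>: "C1_periodic \<phi> P"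
  have "tint (\<lambda>y. f y * P i y + G y $ i * \<phi> y) = 0"
    using tint_partial_derivative_eq_0[OF C1_periodic_mult[OF assms \<phi>]] by simp
  moreover have "tint (\<lambda>y. f y * P i y + G y $ i * \<phi> y) = tint (\<lambda>y. f y * P i y) + tint (\<lambda>y. G y $ i * \<phi> y)"
    using continuous_on_if_C1_periodic[OF assms] continuous_on_if_C1_periodic[OF \<phi>]
    by (intro tint_add continuous_on_mult)
  ultimately show "tint (\<lambda>y. f y * P i y) = - tint (\<lambda>y. G y $ i * \<phi> y)"
    by simp
qed

lemma ess_bounded_if_continuous:
  assumes "continuous_on cell f"
  shows "ess_bounded f"
proof -
  have "compact (f ` cell)"
    by (rule compact_continuous_image[OF assms]) (simp add: cell_def)
  then obtain B where B: "\<forall>y\<in>cell. \<bar>f y\<bar> \<le> B"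
    unfolding bounded_real[symmetric] by (meson compact_imp_bounded bounded_real image_eqI)
  have "AE y in lebesgue_on cell. y \<in> cell"
    by (rule AE_I2) simp
  then have "AE y in lebesgue_on cell. \<bar>f y\<bar> \<le> B"
    by eventually_elim (use B in blast)
  then show ?thesis
    unfolding ess_bounded_def ..
qed

lemma W1inf_if_C1_periodic:
  assumes "C1_periodic f (\<lambda>i y. G y $ i)" "periodic2 G"
  shows "W1inf f G"
proof -
  have measurable: "F \<in> borel_measurable lebesgue" if "continuous_on UNIV F" for F :: "real^2 \<Rightarrow> 'a::euclidean_space"
    using continuous_imp_measurable_on_sets_lebesgue[OF that] by (simp add: lebesgue_on_UNIV_eq)
  have "continuous_on UNIV G"
    using continuous_on_vec_lambda[of UNIV "\<lambda>i y. G y $ i"] continuous_on_if_C1_periodic(2)[OF assms(1)]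
    by (simp add: vec_lambda_eta)
  then show ?thesis
    using assms measurable[OF continuous_on_if_C1_periodic(1)[OF assms(1)]] measurable[of G]
      ess_bounded_if_continuous continuous_on_if_C1_periodic[OF assms(1)]
    by (simp add: W1inf_def C1_periodic_def weak_gradient_if_C1_periodic)
qed

section \<open>Tensor products\<close>

definition tensor :: "(real \<Rightarrow> real) \<Rightarrow> (real \<Rightarrow> real) \<Rightarrow> real^2 \<Rightarrow> real" where
  "tensor u w y = u (y$1) * w (y$2)"

lemma continuous_on_tensor [continuous_intros]:
  assumes "continuous_on UNIV u" "continuous_on UNIV w"
  shows "continuous_on S (tensor u w)"
  unfolding tensor_def
  by (intro continuous_intros continuous_on_compose2[OF assms(1)] continuous_on_compose2[OF assms(2)]) auto

lemma integral_cbox_tensor: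
  assumes "continuous_on UNIV u" "continuous_on UNIV w"
  shows "integral (cbox a b) (tensor u w) = integral {a$1..b$1} u * integral {a$2..b$2} w"
  unfolding integral_cbox_cart2_iterated[OF continuous_on_tensor[OF assms]]
  by (simp add: tensor_def)

lemma tint_tensor:
  assumes "continuous_on UNIV u" "continuous_on UNIV w"
  shows "tint (tensor u w) = integral {0..1} u * integral {0..1} w"
  using integral_cbox_tensor[OF assms, of 0 One]
  unfolding One_nth zero_index by (simp add: tint_eq_integral continuous_on_tensor assms cell_def)

lemma periodic2_tensor:
  assumes "\<And>t. u (t + 1) = u t" "\<And>t. w (t + 1) = w t"
  shows "periodic2 (tensor u w)"
  unfolding periodic2_def
proof (intro allI)
  fix x :: "real^2" and i :: 2
  show "tensor u w (x + axis i 1) = tensor u w x"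
    using exhaust_2[of i] by (auto simp: tensor_def axis_def assms)
qed

definition tensor_gradient ::
    "(real \<Rightarrow> real) \<Rightarrow> (real \<Rightarrow> real) \<Rightarrow> (real \<Rightarrow> real) \<Rightarrow> (real \<Rightarrow> real) \<Rightarrow> real^2 \<Rightarrow> real^2" where
  "tensor_gradient u u' w w' y = vector [tensor u' w y, tensor u w' y]"

lemma tensor_has_derivative:
  assumes "\<And>t. (u has_real_derivative u' t) (at t)" "\<And>t. (w has_real_derivative w' t) (at t)"
  shows "(tensor u w has_derivative (\<lambda>h. \<Sum>i\<in>UNIV. tensor_gradient u u' w w' y $ i * h $ i)) (at y)"
proof -
  have nth: "((\<lambda>y. y $ i) has_derivative (\<lambda>h. h $ i)) (at y)" for i :: 2 and y :: "real^2"
    by (simp add: bounded_linear_imp_has_derivative bounded_linear_vec_nth)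
  have "(tensor u w has_derivative
      (\<lambda>h. u (y$1) * (h$2 * w' (y$2)) + h$1 * u' (y$1) * w (y$2))) (at y)"
    unfolding tensor_def[abs_def]
    by (intro has_derivative_mult DERIV_compose_FDERIV[OF assms(1) nth] DERIV_compose_FDERIV[OF assms(2) nth])
  then show ?thesis
    by (simp add: tensor_gradient_def tensor_def sum_2 algebra_simps)
qed

lemma tensor_gradient_nth [simp]:
  "tensor_gradient u u' w w' y $ 1 = tensor u' w y" "tensor_gradient u u' w w' y $ 2 = tensor u w' y"
  by (simp_all add: tensor_gradient_def)

lemma W1inf_tensor:
  assumes deriv: "\<And>t. (u has_real_derivative u' t) (at t)" "\<And>t. (w has_real_derivative w' t) (at t)"
    and continuous: "continuous_on UNIV u'" "continuous_on UNIV w'"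
    and periodic: "\<And>t. u (t + 1) = u t" "\<And>t. w (t + 1) = w t" "\<And>t. u' (t + 1) = u' t" "\<And>t. w' (t + 1) = w' t"
  shows "W1inf (tensor u w) (tensor_gradient u u' w w')"
proof (rule W1inf_if_C1_periodic)
  have "continuous_on UNIV u" "continuous_on UNIV w"
    using deriv by (meson DERIV_continuous continuous_at_imp_continuous_on)+
  then have "continuous_on UNIV (\<lambda>y. tensor_gradient u u' w w' y $ i)" for i
    using exhaust_2[of i] continuous by (auto intro!: continuous_on_tensor)
  then show "C1_periodic (tensor u w) (\<lambda>i y. tensor_gradient u u' w w' y $ i)"
    unfolding C1_periodic_def using periodic2_tensor periodic tensor_has_derivative deriv by blast
  show "periodic2 (tensor_gradient u u' w w')"
    using periodic2_tensor[of u' w] periodic2_tensor[of u w'] periodic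
    by (simp add: periodic2_def tensor_gradient_def)
qed

lemma tint_tensor_square:
  assumes "continuous_on UNIV u" "continuous_on UNIV w"
  shows "tint (\<lambda>y. (tensor u w y)\<^sup>2) = integral {0..1} (\<lambda>t. (u t)\<^sup>2) * integral {0..1} (\<lambda>t. (w t)\<^sup>2)"
  using tint_tensor[of "\<lambda>t. (u t)\<^sup>2" "\<lambda>t. (w t)\<^sup>2"] assms
  by (simp add: tensor_def[abs_def] power_mult_distrib continuous_intros)

lemma L1norm_tensor:
  assumes "continuous_on UNIV u" "continuous_on UNIV w"
  shows "L1norm (tensor u w) = integral {0..1} (\<lambda>t. \<bar>u t\<bar>) * integral {0..1} (\<lambda>t. \<bar>w t\<bar>)"
  using tint_tensor[of "\<lambda>t. \<bar>u t\<bar>" "\<lambda>t. \<bar>w t\<bar>"] assms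
  by (simp add: L1norm_def tensor_def[abs_def] abs_mult continuous_intros)

lemma L2norm_tensor:
  assumes "continuous_on UNIV u" "continuous_on UNIV w"
  shows "L2norm (tensor u w) = sqrt (integral {0..1} (\<lambda>t. (u t)\<^sup>2) * integral {0..1} (\<lambda>t. (w t)\<^sup>2))"
  by (simp add: L2norm_def tint_tensor_square assms)

lemma L2norm_vec_tensor_gradient:
  assumes "continuous_on UNIV u" "continuous_on UNIV w" "continuous_on UNIV u'" "continuous_on UNIV w'"
  shows "L2norm_vec (tensor_gradient u u' w w') =
    sqrt (integral {0..1} (\<lambda>t. (u' t)\<^sup>2) * integral {0..1} (\<lambda>t. (w t)\<^sup>2)
      + integral {0..1} (\<lambda>t. (u t)\<^sup>2) * integral {0..1} (\<lambda>t. (w' t)\<^sup>2))"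
proof -
  have "(norm (tensor_gradient u u' w w' y))\<^sup>2 = (tensor u' w y)\<^sup>2 + (tensor u w' y)\<^sup>2" for y
    by (simp add: norm_vec_def L2_set_def sum_2)
  then show ?thesis
    using assms unfolding L2norm_vec_def
    by (simp add: tint_add tint_tensor_square continuous_intros)
qed

section \<open>Balls on the torus\<close>

lemma tdist_less_iff:
  assumes "0 < r"
  shows "tdist x y < r \<longleftrightarrow> (\<exists>k. (\<forall>i. k $ i \<in> \<int>) \<and> norm (x - y - k) < r)"
proof -
  let ?S = "{norm (x - y - k) | k :: real^2. \<forall>i. k $ i \<in> \<int>}"
  have "?S \<noteq> {}"
    by (auto intro!: exI[of _ 0])
  moreover have "bdd_below ?S"
    by (rule bdd_belowI[of _ 0]) auto
  ultimately show ?thesis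
    unfolding tdist_def by (subst cInf_less_iff) blast+
qed
lemma tball_in_sets_lebesgue:
  assumes "0 < r"
  shows "tball x r \<in> sets lebesgue"
proof -
  have "{y. tdist x y < r} = (\<Union>k\<in>{k. \<forall>i. k $ i \<in> \<int>}. ball (x - k) r)"
    unfolding tdist_less_iff[OF assms] by (auto simp: dist_norm algebra_simps)
  then have "open {y. tdist x y < r}"
    by auto
  moreover have "closed cell"
    by (simp add: cell_def closed_cbox)
  ultimately show ?thesis
    unfolding tball_def Collect_conj_eq Collect_mem_eq
    by (intro sets.Int) (auto simp: borel_open borel_closed intro: sets_completionI_sets)
qed

definition square :: "real^2 \<Rightarrow> real \<Rightarrow> (real^2) set" where
  "square c r = cbox (c - r *\<^sub>R One) (c + r *\<^sub>R One)"

lemma mem_square: "y \<in> square c r \<longleftrightarrow> (\<forall>i. \<bar>y $ i - c $ i\<bar> \<le> r)"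
proof -
  have "(a - r \<le> b \<and> b \<le> a + r) \<longleftrightarrow> \<bar>b - a\<bar> \<le> r" for a b :: real
    by (auto simp: abs_le_iff)
  then show ?thesis
    unfolding square_def mem_box_cart vector_add_component vector_minus_component vector_scaleR_component One_nth
    by simp
qed

lemma tball_subset_squares:
  assumes "0 < r" "r < 1"
  shows "tball x r \<subseteq> (\<Union>(i, j) \<in> {\<lfloor>x$1\<rfloor> - 1..\<lfloor>x$1\<rfloor> + 1} \<times> {\<lfloor>x$2\<rfloor> - 1..\<lfloor>x$2\<rfloor> + 1}.
    square (x - vector [of_int i, of_int j]) r)"
proof
  fix y
  assume "y \<in> tball x r"
  then obtain k where k: "\<forall>i. k $ i \<in> \<int>" "norm (x - y - k) < r" and y: "y \<in> cell"
    using tdist_less_iff[OF assms(1)] by (auto simp: tball_def)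
  have close: "\<bar>x $ c - y $ c - k $ c\<bar> < r" for c
    using component_le_norm_cart[of "x - y - k" c] k(2) by simp
  have integral: "k $ c = of_int \<lfloor>k $ c\<rfloor>" for c
    using k(1) by (metis Ints_cases floor_of_int)
  have floor_range: "\<lfloor>k $ c\<rfloor> \<in> {\<lfloor>x $ c\<rfloor> - 1..\<lfloor>x $ c\<rfloor> + 1}" for c
  proof -
    have "0 \<le> y $ c" "y $ c \<le> 1"
      using y by (auto simp: mem_cell)
    then have "x $ c < of_int (\<lfloor>k $ c\<rfloor> + 2)" "of_int (\<lfloor>k $ c\<rfloor> - 1) \<le> x $ c"
      using close[of c] assms(2) integral[of c] unfolding abs_less_iff by simp_all
    then show ?thesis
      unfolding floor_less_iff[symmetric] le_floor_iff[symmetric] by simp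
  qed
  have "k = vector [of_int \<lfloor>k $ 1\<rfloor>, of_int \<lfloor>k $ 2\<rfloor>]"
    using integral by (simp add: vec_eq_iff forall_2)
  moreover have "y \<in> square (x - k) r"
    using close by (auto simp: mem_square abs_minus_commute algebra_simps intro: less_imp_le)
  ultimately show "y \<in> (\<Union>(i, j) \<in> {\<lfloor>x$1\<rfloor> - 1..\<lfloor>x$1\<rfloor> + 1} \<times> {\<lfloor>x$2\<rfloor> - 1..\<lfloor>x$2\<rfloor> + 1}.
      square (x - vector [of_int i, of_int j]) r)"
    using floor_range[of 1] floor_range[of 2] by force
qed

lemma integral_le_sum_integral_cover:
  fixes g :: "'a::euclidean_space \<Rightarrow> real"
  assumes "finite K" "S \<subseteq> (\<Union>k\<in>K. B k)" "\<And>y. 0 \<le> g y"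
    and "g integrable_on S" "\<And>k. k \<in> K \<Longrightarrow> g integrable_on B k"
  shows "integral S g \<le> (\<Sum>k\<in>K. integral (B k) g)"
proof -
  have integrable: "(\<lambda>y. if y \<in> B k then g y else 0) integrable_on UNIV" if "k \<in> K" for k
    using assms(5)[OF that] by (simp add: integrable_restrict_UNIV)
  have "integral S g = integral UNIV (\<lambda>y. if y \<in> S then g y else 0)"
    by (simp add: integral_restrict_UNIV)
  also have "\<dots> \<le> integral UNIV (\<lambda>y. \<Sum>k\<in>K. if y \<in> B k then g y else 0)"
  proof (rule integral_le)
    show "(\<lambda>y. if y \<in> S then g y else 0) integrable_on UNIV"
      using assms(4) by (simp add: integrable_restrict_UNIV)
    show "(\<lambda>y. \<Sum>k\<in>K. if y \<in> B k then g y else 0) integrable_on UNIV"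
      using integrable by (intro integrable_sum assms(1))
    fix y
    show "(if y \<in> S then g y else 0) \<le> (\<Sum>k\<in>K. if y \<in> B k then g y else 0)"
    proof (cases "y \<in> S")
      case True
      then obtain k where "k \<in> K" "y \<in> B k"
        using assms(2) by blast
      then have "g y \<le> (\<Sum>k\<in>K. if y \<in> B k then g y else 0)"
        using member_le_sum[of k K "\<lambda>k. if y \<in> B k then g y else 0"] assms(1,3) by simp
      then show ?thesis
        using True by simp
    qed (simp add: assms(3) sum_nonneg)
  qed
  also have "\<dots> = (\<Sum>k\<in>K. integral (B k) g)"
    using integrable by (simp add: integral_sum[OF assms(1)] integral_restrict_UNIV)
  finally show ?thesis .
qed

lemma integral_tball_le:
  fixes g :: "real^2 \<Rightarrow> real"
  assumes "continuous_on UNIV g" "\<And>y. 0 \<le> g y" "0 < r" "r < 1" "\<And>c. integral (square c r) g \<le> M"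
  shows "integral\<^sup>L (lebesgue_on (tball x r)) g \<le> 9 * M"
proof -
  let ?D = "{\<lfloor>x$1\<rfloor> - 1..\<lfloor>x$1\<rfloor> + 1} \<times> {\<lfloor>x$2\<rfloor> - 1..\<lfloor>x$2\<rfloor> + 1}"
  let ?B = "\<lambda>(i, j). square (x - vector [of_int i, of_int j]) r"
  have sets: "tball x r \<in> sets lebesgue"
    by (rule tball_in_sets_lebesgue[OF assms(3)])
  have "g absolutely_integrable_on cell"
    unfolding cell_def by (rule absolutely_integrable_continuous) (rule continuous_on_subset[OF assms(1)], simp)
  then have "g absolutely_integrable_on tball x r"
    by (rule set_integrable_subset[OF _ sets]) (auto simp: tball_def)
  then have integrable: "integrable (lebesgue_on (tball x r)) g"
    by (rule absolutely_integrable_imp_integrable[OF _ sets])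
  have "integral\<^sup>L (lebesgue_on (tball x r)) g = integral (tball x r) g"
    by (rule lebesgue_integral_eq_integral[OF integrable sets])
  also have "\<dots> \<le> (\<Sum>k\<in>?D. integral (?B k) g)"
  proof (rule integral_le_sum_integral_cover)
    show "tball x r \<subseteq> (\<Union>k\<in>?D. ?B k)"
      using tball_subset_squares[OF assms(3,4)] by (simp add: case_prod_beta')
    show "g integrable_on tball x r"
      by (rule integrable_on_lebesgue_on[OF integrable sets])
    show "g integrable_on ?B k" for k
      unfolding square_def case_prod_beta' by (rule integrable_continuous) (rule continuous_on_subset[OF assms(1)], simp)
  qed (simp_all add: assms(2))
  also have "\<dots> \<le> of_nat (card ?D) * M"
    using assms(5) by (intro sum_bounded_above) (simp add: case_prod_beta')
  also have "\<dots> = 9 * M"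
    by simp
  finally show ?thesis .
qed

section \<open>A bump profile\<close>

lemma has_real_derivative_max_zero_power:
  fixes x :: real
  assumes "1 \<le> n"
  shows "((\<lambda>x::real. (max 0 x) ^ Suc n) has_real_derivative Suc n * (max 0 x) ^ n) (at x)"
proof (cases "x = 0")
  case True
  have "((\<lambda>y::real. \<bar>y\<bar> ^ n) \<longlongrightarrow> \<bar>0\<bar> ^ n) (at 0)"
    by (intro tendsto_intros)
  then have "((\<lambda>y::real. \<bar>y\<bar> ^ n) \<longlongrightarrow> 0) (at 0)"
    using assms by (simp add: zero_power)
  then have "((\<lambda>y. ((max 0 y) ^ Suc n - (max 0 0) ^ Suc n) / (y - 0)) \<longlongrightarrow> 0) (at (0::real))"
    by (rule Lim_null_comparison[rotated], intro always_eventually allI)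
       (auto simp: abs_mult power_abs max_def)
  then show ?thesis
    using True assms by (simp add: has_field_derivative_iff zero_power)
next
  case False
  then consider "0 < x" | "x < 0"
    by linarith
  then show ?thesis
  proof cases
    case 1
    then have "\<forall>\<^sub>F y in nhds x. (max 0 y) ^ Suc n = y ^ Suc n"
      by (auto intro: eventually_mono[OF eventually_nhds_in_open[of "{0<..}"]])
    from DERIV_cong_ev[OF refl this refl] show ?thesis
      using DERIV_pow[of "Suc n" x] 1 by simp
  next
    case 2
    then have "\<forall>\<^sub>F y in nhds x. (max 0 y) ^ Suc n = 0"
      by (auto intro: eventually_mono[OF eventually_nhds_in_open[of "{..<0}"]])
    from DERIV_cong_ev[OF refl this refl] show ?thesis
      using 2 assms by (simp add: zero_power)
  qed
qed

definition bump :: "real \<Rightarrow> real" where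
  "bump s = (max 0 (s - s\<^sup>2)) ^ 3"

definition bump' :: "real \<Rightarrow> real" where
  "bump' s = 3 * (max 0 (s - s\<^sup>2))\<^sup>2 * (1 - 2 * s)"

definition bump'' :: "real \<Rightarrow> real" where
  "bump'' s = 6 * max 0 (s - s\<^sup>2) * (1 - 2 * s)\<^sup>2 - 6 * (max 0 (s - s\<^sup>2))\<^sup>2"

lemma max_zero_parabola_eq_0:
  assumes "s \<notin> {0<..<1}"
  shows "max 0 (s - s\<^sup>2) = (0::real)"
proof -
  have "s * (1 - s) \<le> 0"
    using assms by (cases "s \<le> 0") (auto intro: mult_nonpos_nonneg mult_nonneg_nonpos)
  then show ?thesis
    by (simp add: power2_eq_square algebra_simps)
qed

lemma bump_eq_0: "s \<notin> {0<..<1} \<Longrightarrow> bump s = 0"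
  and bump'_eq_0: "s \<notin> {0<..<1} \<Longrightarrow> bump' s = 0"
  and bump''_eq_0: "s \<notin> {0<..<1} \<Longrightarrow> bump'' s = 0"
  by (simp_all add: bump_def bump'_def bump''_def max_zero_parabola_eq_0)

lemma bump_has_real_derivative: "(bump has_real_derivative bump' s) (at s)"
proof -
  have "((\<lambda>s. s - s\<^sup>2) has_real_derivative 1 - 2 * s) (at s)"
    by (auto intro!: derivative_eq_intros)
  from DERIV_chain2[OF has_real_derivative_max_zero_power this, of 2] show ?thesis
    by (simp add: bump_def[abs_def] bump'_def mult.assoc)
qed

lemma bump'_has_real_derivative: "(bump' has_real_derivative bump'' s) (at s)"
proof -
  have "((\<lambda>s. s - s\<^sup>2) has_real_derivative 1 - 2 * s) (at s)"
    by (auto intro!: derivative_eq_intros)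
  from DERIV_chain2[OF has_real_derivative_max_zero_power this, of 1]
  have "((\<lambda>s. (max 0 (s - s\<^sup>2))\<^sup>2) has_real_derivative 2 * max 0 (s - s\<^sup>2) * (1 - 2 * s)) (at s)"
    by (simp add: numeral_2_eq_2)
  from DERIV_mult[OF DERIV_cmult[OF this, of 3] DERIV_diff[OF DERIV_const DERIV_cmult[OF DERIV_ident]]]
  show ?thesis
    unfolding bump'_def[abs_def] bump''_def by (rule DERIV_cong) (simp add: algebra_simps power2_eq_square)
qed

lemma continuous_on_bump' [continuous_intros]: "continuous_on S bump'"
  and continuous_on_bump'' [continuous_intros]: "continuous_on S bump''"
  unfolding bump'_def[abs_def] bump''_def[abs_def] by (intro continuous_intros)+

lemma abs_bump'_le: "\<bar>bump' s\<bar> \<le> 1/2"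
proof (cases "s \<in> {0<..<1}")
  case True
  have "max 0 (s - s\<^sup>2) \<le> 1/4"
    using zero_le_square[of "s - 1/2"] by (intro max.boundedI) (auto simp: power2_eq_square algebra_simps)
  then have "(max 0 (s - s\<^sup>2))\<^sup>2 \<le> (1/4)\<^sup>2"
    by (intro power_mono) auto
  moreover have "\<bar>1 - 2 * s\<bar> \<le> 1"
    using True by auto
  ultimately have "3 * (max 0 (s - s\<^sup>2))\<^sup>2 * \<bar>1 - 2 * s\<bar> \<le> 3 * (1/4)\<^sup>2 * 1"
    by (intro mult_mono) auto
  then show ?thesis
    by (simp add: bump'_def abs_mult power2_eq_square)
qed (simp add: bump'_eq_0)

lemma integral_bump': "integral {0..1} bump' = 0"
  using has_integral_real_derivative[of 0 1 bump bump'] bump_has_real_derivative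
  by (simp add: bump_eq_0 integral_unique)

lemma integral_square_pos:
  fixes g :: "real \<Rightarrow> real"
  assumes "continuous_on {a..b} g" "x \<in> {a<..<b}" "g x \<noteq> 0"
  shows "integral {a..b} (\<lambda>s. (g s)\<^sup>2) > 0"
proof -
  have continuous: "continuous_on (cbox a b) (\<lambda>s. (g s)\<^sup>2)"
    using assms(1) by (simp add: continuous_intros)
  have "integral {a..b} (\<lambda>s. (g s)\<^sup>2) \<noteq> 0"
  proof
    assume "integral {a..b} (\<lambda>s. (g s)\<^sup>2) = 0"
    then have "((\<lambda>s. (g s)\<^sup>2) has_integral 0) (cbox a b)"
      using integrable_continuous[OF continuous] by (metis box_real(2) integrable_integral)
    from has_integral_0_cbox_imp_0[OF continuous _ this, of x] assms(2)
    have "(g x)\<^sup>2 = 0"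
      by auto
    with assms(3) show False
      by simp
  qed
  moreover have "integral {a..b} (\<lambda>s. (g s)\<^sup>2) \<ge> 0"
    using integrable_continuous[OF continuous] by (simp add: integral_nonneg)
  ultimately show ?thesis
    by linarith
qed

lemma integral_bump'_square_pos: "integral {0..1} (\<lambda>s. (bump' s)\<^sup>2) > 0"
  by (rule integral_square_pos[OF continuous_on_bump', of "1/4"]) (simp_all add: bump'_def max_def power2_eq_square)

lemma integral_bump''_square_pos: "integral {0..1} (\<lambda>s. (bump'' s)\<^sup>2) > 0"
  by (rule integral_square_pos[OF continuous_on_bump'', of "1/2"]) (simp_all add: bump''_def max_def power2_eq_square)

section \<open>Pulse trains\<close>

text \<open>For g vanishing outside (0, 1) this is the sum over k of g ((N t - k) / \<delta>): a train of
  copies of g compressed to width \<delta>/N, one in each interval [k/N, (k + 1)/N].\<close>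

definition pulse_train :: "real \<Rightarrow> real \<Rightarrow> (real \<Rightarrow> real) \<Rightarrow> real \<Rightarrow> real" where
  "pulse_train N \<delta> g t = g (frac (N * t) / \<delta>)"

lemma pulse_train_periodic: "pulse_train (real m) \<delta> g (t + 1) = pulse_train (real m) \<delta> g t"
  using frac_add_of_int_right[of "real m * t" "int m"] by (simp add: pulse_train_def algebra_simps)

text \<open>The lower limit -1 rather than 0 puts 0 in the interior of the integration range, so that
  the primitive is differentiable there.\<close>

definition primitive :: "(real \<Rightarrow> real) \<Rightarrow> real \<Rightarrow> real" where
  "primitive g s = integral {-1..s} g"

lemma primitive_add_integral:
  assumes "continuous_on UNIV g" "-1 \<le> s" "s \<le> t"
  shows "primitive g s + integral {s..t} g = primitive g t"
  unfolding primitive_def using assms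
  by (intro Henstock_Kurzweil_Integration.integral_combine integrable_continuous_real continuous_on_subset[OF assms(1)]) auto

context
  fixes g :: "real \<Rightarrow> real"
  assumes vanishing: "\<And>s. s \<notin> {0<..<1} \<Longrightarrow> g s = 0" and continuous: "continuous_on UNIV g"
begin

lemma integral_eq_0_if_vanishing: "b \<le> 0 \<or> 1 \<le> a \<Longrightarrow> integral {a..b} g = 0"
  using vanishing by (subst Henstock_Kurzweil_Integration.integral_cong[of _ _ "\<lambda>_. 0"]) auto

lemma primitive_eq_0: "s \<le> 0 \<Longrightarrow> primitive g s = 0"
  by (simp add: primitive_def integral_eq_0_if_vanishing)

lemma primitive_eq_integral: "1 \<le> s \<Longrightarrow> primitive g s = integral {0..1} g"
  using primitive_add_integral[OF continuous, of 0 1] primitive_add_integral[OF continuous, of 1 s]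
  by (simp add: primitive_eq_0 integral_eq_0_if_vanishing)

lemma primitive_has_real_derivative: "(primitive g has_real_derivative g s) (at s)"
proof (cases "s < 0")
  case True
  have "\<forall>\<^sub>F y in nhds s. y \<in> {..<0}"
    using True by (intro eventually_nhds_in_open) auto
  then have "\<forall>\<^sub>F y in nhds s. primitive g y = 0"
    by eventually_elim (simp add: primitive_eq_0)
  from DERIV_cong_ev[OF refl this refl] show ?thesis
    using True vanishing by simp
next
  case False
  have "((\<lambda>x. integral {-1..x} g) has_real_derivative g s) (at s within {-1..s+1})"
    by (rule integral_has_real_derivative) (use continuous continuous_on_subset False in auto)
  moreover have "at s within {-1..s+1} = at s"
    by (rule at_within_interior) (use False in auto)
  ultimately show ?thesis
    by (simp add: primitive_def[abs_def])
qed

lemma primitive_bounds: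
  assumes "\<And>s. 0 \<le> g s"
  shows "0 \<le> primitive g s" "primitive g s \<le> integral {0..1} g"
proof -
  have nonneg: "0 \<le> integral {a..b} g" for a b
    using continuous_on_subset[OF continuous subset_UNIV] assms by (intro integral_nonneg integrable_continuous_real)
  then show "0 \<le> primitive g s"
    by (simp add: primitive_def)
  consider "s \<le> 0" | "0 < s" "s \<le> 1" | "1 < s"
    by linarith
  then show "primitive g s \<le> integral {0..1} g"
  proof cases
    case 2
    then have "primitive g s + integral {s..1} g = primitive g 1"
      by (intro primitive_add_integral[OF continuous]) auto
    then show ?thesis
      using nonneg[of s 1] primitive_eq_integral[of 1] by simp
  qed (simp_all add: primitive_eq_0 primitive_eq_integral nonneg)
qed

end

definition pulse_train_primitive :: "real \<Rightarrow> real \<Rightarrow> (real \<Rightarrow> real) \<Rightarrow> real \<Rightarrow> real" where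
  "pulse_train_primitive N \<delta> g t = \<delta> / N * (integral {0..1} g * \<lfloor>N * t\<rfloor> + primitive g (frac (N * t) / \<delta>))"

context
  fixes N \<delta> :: real
  assumes N: "0 < N" and \<delta>: "0 < \<delta>" "\<delta> < 1"
begin

text \<open>Since X is constant near both ends of [0, 1], the jumps of the floor and of frac
  compensate: near t the staircase agrees with a smooth function of t.\<close>

lemma staircase_eventually_eq:
  fixes X :: "real \<Rightarrow> real"
  assumes "\<And>s. s \<le> 0 \<Longrightarrow> X s = 0" "\<And>s. 1 \<le> s \<Longrightarrow> X s = c"
  shows "\<forall>\<^sub>F t' in nhds t. c * \<lfloor>N * t'\<rfloor> + X (frac (N * t') / \<delta>) = c * \<lfloor>N * t\<rfloor> + X ((N * t' - \<lfloor>N * t\<rfloor>) / \<delta>)"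
proof -
  define k where "k = \<lfloor>N * t\<rfloor>"
  have "k \<le> N * t" "N * t < k + 1"
    unfolding k_def by linarith+
  then have "t \<in> {(k - 1 + \<delta>) / N <..< (k + 1) / N}"
    using N \<delta> by (auto simp: field_simps)
  then have "\<forall>\<^sub>F t' in nhds t. t' \<in> {(k - 1 + \<delta>) / N <..< (k + 1) / N}"
    by (intro eventually_nhds_in_open) auto
  then show ?thesis
    unfolding k_def[symmetric]
  proof eventually_elim
    case (elim t')
    then have t': "k - 1 + \<delta> < N * t'" "N * t' < k + 1"
      using N by (auto simp: field_simps)
    show ?case
    proof (cases "k \<le> N * t'")
      case True
      then have "\<lfloor>N * t'\<rfloor> = k"
        using t' by (simp add: floor_eq_iff)
      then show ?thesis
        by (simp add: frac_def)
    next
      case False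
      then have floor: "\<lfloor>N * t'\<rfloor> = k - 1"
        using t' \<delta> by (simp add: floor_eq_iff)
      then have "1 \<le> frac (N * t') / \<delta>" "(N * t' - k) / \<delta> \<le> 0"
        using t' \<delta> False by (simp_all add: frac_def field_simps)
      then show ?thesis
        using assms by (simp add: floor algebra_simps)
    qed
  qed
qed

lemma staircase_has_real_derivative:
  fixes X :: "real \<Rightarrow> real"
  assumes "\<And>s. s \<le> 0 \<Longrightarrow> X s = 0" "\<And>s. 1 \<le> s \<Longrightarrow> X s = c"
    and "\<And>s. (X has_real_derivative X' s) (at s)"
  shows "((\<lambda>t. c * \<lfloor>N * t\<rfloor> + X (frac (N * t) / \<delta>)) has_real_derivative N / \<delta> * X' (frac (N * t) / \<delta>)) (at t)"
proof -
  have "((\<lambda>t'. (N * t' - \<lfloor>N * t\<rfloor>) / \<delta>) has_real_derivative N / \<delta>) (at t)"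
    using \<delta> by (auto intro!: derivative_eq_intros)
  from DERIV_add[OF DERIV_const DERIV_chain2[OF assms(3) this]]
  have "((\<lambda>t'. c * \<lfloor>N * t\<rfloor> + X ((N * t' - \<lfloor>N * t\<rfloor>) / \<delta>)) has_real_derivative
      N / \<delta> * X' (frac (N * t) / \<delta>)) (at t)"
    by (simp add: frac_def mult.commute)
  then show ?thesis
    by (subst DERIV_cong_ev[OF refl staircase_eventually_eq[OF assms(1,2)] refl])
qed

lemma pulse_train_has_real_derivative:
  assumes "\<And>s. s \<notin> {0<..<1} \<Longrightarrow> g s = 0" "\<And>s. (g has_real_derivative g' s) (at s)"
  shows "(pulse_train N \<delta> g has_real_derivative N / \<delta> * pulse_train N \<delta> g' t) (at t)"
  using staircase_has_real_derivative[of g 0 g'] assms by (simp add: pulse_train_def[abs_def])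

lemma isCont_pulse_train:
  assumes "\<And>s. s \<notin> {0<..<1} \<Longrightarrow> g s = 0" "continuous_on UNIV g"
  shows "isCont (pulse_train N \<delta> g) t"
proof -
  have "isCont (\<lambda>t'. g ((N * t' - \<lfloor>N * t\<rfloor>) / \<delta>)) t"
    by (rule isCont_o2[OF _ continuous_on_interior[OF assms(2)]]) (use \<delta> in \<open>auto intro!: continuous_intros\<close>)
  then show ?thesis
    using isCont_cong[OF staircase_eventually_eq[of g 0]] assms(1)
    by (simp add: pulse_train_def[abs_def])
qed

lemma pulse_train_primitive_has_real_derivative:
  assumes "\<And>s. s \<notin> {0<..<1} \<Longrightarrow> g s = 0" "continuous_on UNIV g"
  shows "(pulse_train_primitive N \<delta> g has_real_derivative pulse_train N \<delta> g t) (at t)"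
proof -
  have "((\<lambda>t. integral {0..1} g * \<lfloor>N * t\<rfloor> + primitive g (frac (N * t) / \<delta>)) has_real_derivative
      N / \<delta> * g (frac (N * t) / \<delta>)) (at t)"
    using assms by (intro staircase_has_real_derivative primitive_eq_0 primitive_eq_integral primitive_has_real_derivative)
  from DERIV_cmult[OF this, of "\<delta> / N"] show ?thesis
    using N \<delta> by (simp add: pulse_train_primitive_def[abs_def] pulse_train_def)
qed

lemma has_integral_pulse_train:
  assumes "\<And>s. s \<notin> {0<..<1} \<Longrightarrow> g s = 0" "continuous_on UNIV g" "a \<le> b"
  shows "(pulse_train N \<delta> g has_integral pulse_train_primitive N \<delta> g b - pulse_train_primitive N \<delta> g a) {a..b}"
  using assms by (intro has_integral_real_derivative pulse_train_primitive_has_real_derivative)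

lemma integral_pulse_train_le:
  assumes "\<And>s. s \<notin> {0<..<1} \<Longrightarrow> g s = 0" "continuous_on UNIV g" "\<And>s. 0 \<le> g s" "a \<le> b"
  shows "integral {a..b} (pulse_train N \<delta> g) \<le> \<delta> / N * (N * (b - a) + 2) * integral {0..1} g"
proof -
  define c where "c = integral {0..1} g"
  have c: "0 \<le> c"
    unfolding c_def using continuous_on_subset[OF assms(2) subset_UNIV] assms(3)
    by (intro integral_nonneg integrable_continuous_real)
  have "of_int \<lfloor>N * b\<rfloor> - of_int \<lfloor>N * a\<rfloor> \<le> N * b - N * a + 1"
    by linarith
  then have "c * (\<lfloor>N * b\<rfloor> - \<lfloor>N * a\<rfloor>) \<le> c * (N * (b - a) + 1)"
    using c by (intro mult_left_mono) (simp_all add: algebra_simps)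
  moreover have "primitive g (frac (N * b) / \<delta>) - primitive g (frac (N * a) / \<delta>) \<le> c"
    using primitive_bounds[OF assms(1-3), of "frac (N * a) / \<delta>"] primitive_bounds[OF assms(1-3), of "frac (N * b) / \<delta>"]
    by (simp add: c_def)
  ultimately have "pulse_train_primitive N \<delta> g b - pulse_train_primitive N \<delta> g a \<le> \<delta> / N * (c * (N * (b - a) + 1) + c)"
    using N \<delta> unfolding pulse_train_primitive_def c_def[symmetric] right_diff_distrib[symmetric]
    by (intro mult_left_mono) (simp_all add: right_diff_distrib)
  also have "\<dots> = \<delta> / N * (N * (b - a) + 2) * c"
    by (simp add: algebra_simps)
  finally show ?thesis
    using integral_unique[OF has_integral_pulse_train[OF assms(1,2,4)]] by (simp add: c_def)
qed

end

lemma integral_pulse_train_unit_interval: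
  assumes "1 \<le> m" "0 < \<delta>" "\<delta> < 1" "\<And>s. s \<notin> {0<..<1} \<Longrightarrow> g s = 0" "continuous_on UNIV g"
  shows "integral {0..1} (pulse_train (real m) \<delta> g) = \<delta> * integral {0..1} g"
proof -
  have "primitive g 0 = 0"
    using primitive_eq_0[OF assms(4,5) order_refl] .
  then show ?thesis
    using integral_unique[OF has_integral_pulse_train[of "real m" \<delta> g 0 1]] assms
    by (simp add: pulse_train_primitive_def frac_def)
qed

section \<open>The oscillating functions\<close>

text \<open>The first bound wins for L < \<delta>/N, the second for L > 1/N, and in between both are
  at most 3/N = 3 (\<delta>/N)^\<beta>.\<close>

lemma le_powr_if_le_min_linear_bounds:
  fixes \<beta> N \<delta> L I :: real
  assumes \<beta>: "0 < \<beta>" "\<beta> < 1" and N: "0 < N" and \<delta>: "0 < \<delta>" and scaling: "(\<delta> / N) powr \<beta> = 1 / N"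
    and L: "0 \<le> L" "L \<le> 2" and I: "I \<le> L / \<delta>" "I \<le> L + 2 / N"
  shows "I \<le> 6 * L powr \<beta>"
proof -
  define p where "p = \<delta> / N"
  have p: "0 < p" "p powr \<beta> = 1 / N"
    using N \<delta> scaling by (simp_all add: p_def)
  have "p powr (1 - \<beta>) = p / p powr \<beta>"
    using p(1) by (simp add: powr_diff)
  then have p_compl: "p powr (1 - \<beta>) = \<delta>"
    using N p by (simp add: p_def)
  have L_split: "L = L powr \<beta> * L powr (1 - \<beta>)"
    using L by (simp add: powr_add[symmetric])
  consider "1 / N \<le> L" | "p \<le> L" "L < 1 / N" | "L < p"
    by linarith
  then show ?thesis
  proof cases
    case 1
    have "L powr (1 - \<beta>) \<le> 2 powr 1"
      using L \<beta> by (intro order_trans[OF powr_mono2 powr_mono]) auto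
    then have "3 * (L powr \<beta> * L powr (1 - \<beta>)) \<le> 3 * (L powr \<beta> * 2)"
      by (intro mult_left_mono) auto
    then show ?thesis
      using I(2) 1 L_split by linarith
  next
    case 2
    have "I \<le> 3 * (1 / N)"
      using I(2) 2 by simp
    also have "\<dots> = 3 * p powr \<beta>"
      using p by simp
    also have "\<dots> \<le> 3 * L powr \<beta>"
      using 2 p \<beta> by (intro mult_left_mono powr_mono2) auto
    finally show ?thesis
      by (simp add: order_trans)
  next
    case 3
    have "I \<le> L powr \<beta> * L powr (1 - \<beta>) / \<delta>"
      using I(1) L_split by simp
    also have "\<dots> \<le> L powr \<beta> * p powr (1 - \<beta>) / \<delta>"
      using 3 L \<beta> \<delta> by (intro divide_right_mono mult_left_mono powr_mono2) auto
    also have "\<dots> = L powr \<beta>"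
      using p_compl \<delta> by simp
    finally show ?thesis
      by (simp add: order_trans)
  qed
qed

locale oscillation =
  fixes N :: nat and \<beta> :: real
  assumes N: "2 \<le> N" and \<beta>: "0 < \<beta>" "\<beta> < 1"
begin

definition \<delta> :: real where
  "\<delta> = real N powr (1 - 1 / \<beta>)"

lemma N_pos: "0 < real N"
  using N by simp

lemma \<delta>_pos: "0 < \<delta>"
  using N_pos by (simp add: \<delta>_def)

lemma \<delta>_less_1: "\<delta> < 1"
  unfolding \<delta>_def using N \<beta> by (intro powr_less_one) (auto simp: field_simps)

lemma \<delta>_scaling: "(\<delta> / N) powr \<beta> = 1 / N"
proof -
  have "\<delta> / N = real N powr (- 1 / \<beta>)"
    using N_pos by (simp add: \<delta>_def powr_diff diff_divide_distrib powr_minus_divide)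
  then have "(\<delta> / N) powr \<beta> = real N powr (- 1 / \<beta> * \<beta>)"
    by (simp only: powr_powr)
  also have "\<dots> = 1 / N"
    using \<beta> N_pos by (simp add: powr_minus_divide)
  finally show ?thesis .
qed

definition osc :: "real \<Rightarrow> real" where
  "osc t = pulse_train N \<delta> bump' t / \<delta>"

definition osc' :: "real \<Rightarrow> real" where
  "osc' t = N / \<delta>\<^sup>2 * pulse_train N \<delta> bump'' t"

lemma osc_has_real_derivative: "(osc has_real_derivative osc' t) (at t)"
proof -
  have "(pulse_train N \<delta> bump' has_real_derivative N / \<delta> * pulse_train N \<delta> bump'' t) (at t)"
    using N_pos \<delta>_pos \<delta>_less_1 bump'_eq_0 bump'_has_real_derivative by (rule pulse_train_has_real_derivative)
  from DERIV_cdivide[OF this, of \<delta>] show ?thesis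
    by (simp add: osc_def[abs_def] osc'_def power2_eq_square)
qed

lemma continuous_on_osc: "continuous_on UNIV osc"
  using osc_has_real_derivative by (meson DERIV_continuous continuous_at_imp_continuous_on)

lemma continuous_on_osc': "continuous_on UNIV osc'"
proof -
  have "isCont (pulse_train N \<delta> bump'') t" for t
    using N_pos \<delta>_pos \<delta>_less_1 bump''_eq_0 continuous_on_bump'' by (rule isCont_pulse_train)
  then show ?thesis
    unfolding osc'_def[abs_def] by (intro continuous_at_imp_continuous_on ballI continuous_intros)
qed

lemma osc_periodic: "osc (t + 1) = osc t"
  and osc'_periodic: "osc' (t + 1) = osc' t"
  by (simp_all add: osc_def osc'_def pulse_train_periodic)

lemma integral_pulse_train:
  assumes "\<And>s. s \<notin> {0<..<1} \<Longrightarrow> g s = 0" "continuous_on UNIV g"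
  shows "integral {0..1} (pulse_train N \<delta> g) = \<delta> * integral {0..1} g"
  using N \<delta>_pos \<delta>_less_1 assms by (intro integral_pulse_train_unit_interval) auto

lemma integral_osc: "integral {0..1} osc = 0"
  using integral_pulse_train[OF bump'_eq_0 continuous_on_bump']
  by (simp add: osc_def[abs_def] integral_bump')

lemma integral_osc_square: "integral {0..1} (\<lambda>t. (osc t)\<^sup>2) = integral {0..1} (\<lambda>s. (bump' s)\<^sup>2) / \<delta>"
proof -
  have "(\<lambda>t. (osc t)\<^sup>2) = (\<lambda>t. pulse_train N \<delta> (\<lambda>s. (bump' s)\<^sup>2) t / \<delta>\<^sup>2)"
    by (simp add: fun_eq_iff osc_def pulse_train_def power_divide)
  moreover have "integral {0..1} (pulse_train N \<delta> (\<lambda>s. (bump' s)\<^sup>2)) = \<delta> * integral {0..1} (\<lambda>s. (bump' s)\<^sup>2)"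
    by (rule integral_pulse_train) (simp_all add: bump'_eq_0 continuous_intros)
  ultimately show ?thesis
    using \<delta>_pos by (simp add: integral_divide power2_eq_square)
qed

lemma integral_osc'_square: "integral {0..1} (\<lambda>t. (osc' t)\<^sup>2) = N\<^sup>2 * integral {0..1} (\<lambda>s. (bump'' s)\<^sup>2) / \<delta> ^ 3"
proof -
  have "(\<lambda>t. (osc' t)\<^sup>2) = (\<lambda>t. (N / \<delta>\<^sup>2)\<^sup>2 * pulse_train N \<delta> (\<lambda>s. (bump'' s)\<^sup>2) t)"
    by (simp add: fun_eq_iff osc'_def pulse_train_def power_mult_distrib power_divide)
  moreover have "integral {0..1} (pulse_train N \<delta> (\<lambda>s. (bump'' s)\<^sup>2)) = \<delta> * integral {0..1} (\<lambda>s. (bump'' s)\<^sup>2)"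
    by (rule integral_pulse_train) (simp_all add: bump''_eq_0 continuous_intros)
  ultimately show ?thesis
    using \<delta>_pos by (simp add: power2_eq_square power3_eq_cube)
qed

lemma integral_abs_osc_le:
  assumes "a \<le> b" "b - a \<le> 2"
  shows "integral {a..b} (\<lambda>t. \<bar>osc t\<bar>) \<le> 6 * (b - a) powr \<beta>"
proof (rule le_powr_if_le_min_linear_bounds[OF \<beta> N_pos \<delta>_pos \<delta>_scaling])
  have abs_osc: "\<bar>osc t\<bar> = pulse_train N \<delta> (\<lambda>s. \<bar>bump' s\<bar>) t / \<delta>" for t
    using \<delta>_pos by (simp add: osc_def pulse_train_def)
  have continuous: "continuous_on S (\<lambda>t. \<bar>osc t\<bar>)" for S
    using continuous_on_subset[OF continuous_on_osc subset_UNIV] by (intro continuous_intros)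
  have "\<bar>bump' s\<bar> \<le> 1" for s
    using abs_bump'_le[of s] by linarith
  then have "\<bar>osc t\<bar> \<le> 1 / \<delta>" for t
    using \<delta>_pos unfolding abs_osc pulse_train_def by (simp add: divide_right_mono)
  then have "integral {a..b} (\<lambda>t. \<bar>osc t\<bar>) \<le> integral {a..b} (\<lambda>_. 1 / \<delta>)"
    by (intro integral_le integrable_continuous_real continuous) auto
  then show "integral {a..b} (\<lambda>t. \<bar>osc t\<bar>) \<le> (b - a) / \<delta>"
    using assms(1) by simp
  have "integral {0..1} (\<lambda>s. \<bar>bump' s\<bar>) \<le> integral {0..1} (\<lambda>_::real. 1 / 2)"
    using abs_bump'_le by (intro integral_le integrable_continuous_real) (auto intro: continuous_intros)
  then have half: "integral {0..1} (\<lambda>s. \<bar>bump' s\<bar>) \<le> 1 / 2"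
    by simp
  have "integral {a..b} (pulse_train N \<delta> (\<lambda>s. \<bar>bump' s\<bar>))
      \<le> \<delta> / N * (N * (b - a) + 2) * integral {0..1} (\<lambda>s. \<bar>bump' s\<bar>)"
    by (rule integral_pulse_train_le[OF N_pos \<delta>_pos \<delta>_less_1])
       (simp_all add: bump'_eq_0 continuous_intros assms(1))
  also have "\<dots> \<le> \<delta> / N * (N * (b - a) + 2) * (1 / 2)"
    using half \<delta>_pos N_pos assms(1) by (intro mult_left_mono) auto
  finally have "integral {a..b} (pulse_train N \<delta> (\<lambda>s. \<bar>bump' s\<bar>)) \<le> \<delta> / N * (N * (b - a) + 2) * (1 / 2)" .
  then have "integral {a..b} (\<lambda>t. \<bar>osc t\<bar>) \<le> (b - a) / 2 + 1 / N"
    using \<delta>_pos N_pos unfolding abs_osc by (simp add: integral_divide field_simps)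
  moreover have "1 / N \<le> 2 / N" "(b - a) / 2 \<le> b - a"
    using N_pos assms(1) by (simp_all add: divide_right_mono)
  ultimately show "integral {a..b} (\<lambda>t. \<bar>osc t\<bar>) \<le> b - a + 2 / N"
    by linarith
qed (use assms in auto)

definition osc_tensor :: "real^2 \<Rightarrow> real" where
  "osc_tensor = tensor osc osc"

definition osc_gradient :: "real^2 \<Rightarrow> real^2" where
  "osc_gradient = tensor_gradient osc osc' osc osc'"

lemma W1inf_osc_tensor: "W1inf osc_tensor osc_gradient"
  unfolding osc_tensor_def osc_gradient_def
  by (intro W1inf_tensor osc_has_real_derivative continuous_on_osc' osc_periodic osc'_periodic)

lemma tint_osc_tensor: "tint osc_tensor = 0"
  by (simp add: osc_tensor_def tint_tensor continuous_on_osc integral_osc)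

lemma L1norm_osc_tensor_le: "L1norm osc_tensor \<le> 36"
proof -
  define I where "I = integral {0..1} (\<lambda>t. \<bar>osc t\<bar>)"
  have "I \<le> 6"
    using integral_abs_osc_le[of 0 1] by (simp add: I_def)
  moreover have "0 \<le> I"
    unfolding I_def using continuous_on_subset[OF continuous_on_osc subset_UNIV]
    by (intro integral_nonneg integrable_continuous_real continuous_intros) auto
  ultimately have "I * I \<le> 6 * 6"
    by (intro mult_mono) auto
  then show ?thesis
    by (simp add: osc_tensor_def L1norm_tensor continuous_on_osc I_def)
qed

lemma L2norm_osc_tensor: "L2norm osc_tensor = integral {0..1} (\<lambda>s. (bump' s)\<^sup>2) / \<delta>"
proof -
  define A where "A = integral {0..1} (\<lambda>s. (bump' s)\<^sup>2)"
  have "L2norm osc_tensor = sqrt (A / \<delta> * (A / \<delta>))"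
    unfolding osc_tensor_def L2norm_tensor[OF continuous_on_osc continuous_on_osc] integral_osc_square A_def ..
  also have "\<dots> = A / \<delta>"
    unfolding real_sqrt_abs2 using integral_bump'_square_pos \<delta>_pos by (simp add: A_def)
  finally show ?thesis
    by (simp add: A_def)
qed

lemma L2norm_vec_osc_gradient:
  "L2norm_vec osc_gradient =
    N / \<delta>\<^sup>2 * sqrt (2 * integral {0..1} (\<lambda>s. (bump' s)\<^sup>2) * integral {0..1} (\<lambda>s. (bump'' s)\<^sup>2))"
proof -
  define A B where "A = integral {0..1} (\<lambda>s. (bump' s)\<^sup>2)" and "B = integral {0..1} (\<lambda>s. (bump'' s)\<^sup>2)"
  have "L2norm_vec osc_gradient = sqrt (N\<^sup>2 * B / \<delta> ^ 3 * (A / \<delta>) + A / \<delta> * (N\<^sup>2 * B / \<delta> ^ 3))"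
    unfolding osc_gradient_def L2norm_vec_tensor_gradient[OF continuous_on_osc continuous_on_osc continuous_on_osc' continuous_on_osc']
      integral_osc_square integral_osc'_square A_def B_def ..
  also have "\<dots> = sqrt ((N / \<delta>\<^sup>2)\<^sup>2 * (2 * A * B))"
    using \<delta>_pos by (simp add: field_simps power2_eq_square power3_eq_cube)
  also have "\<dots> = N / \<delta>\<^sup>2 * sqrt (2 * A * B)"
    using \<delta>_pos by (simp add: real_sqrt_mult)
  finally show ?thesis
    by (simp add: A_def B_def)
qed

lemma integral_square_abs_osc_tensor_le:
  assumes "0 < r" "r < 1"
  shows "integral (square c r) (\<lambda>y. \<bar>osc_tensor y\<bar>) \<le> 144 * r powr (2 * \<beta>)"
proof -
  let ?I = "\<lambda>i. integral {c $ i - r..c $ i + r} (\<lambda>t. \<bar>osc t\<bar>)"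
  have continuous: "continuous_on UNIV (\<lambda>t. \<bar>osc t\<bar>)"
    using continuous_on_osc by (intro continuous_intros)
  have side: "?I i \<le> 6 * (2 * r) powr \<beta>" for i
    using integral_abs_osc_le[of "c $ i - r" "c $ i + r"] assms by simp
  have nonneg: "0 \<le> ?I i" for i
    using continuous_on_subset[OF continuous subset_UNIV] by (intro integral_nonneg integrable_continuous_real) auto
  have abs_osc_tensor: "(\<lambda>y. \<bar>osc_tensor y\<bar>) = tensor (\<lambda>t. \<bar>osc t\<bar>) (\<lambda>t. \<bar>osc t\<bar>)"
    by (simp add: fun_eq_iff osc_tensor_def tensor_def abs_mult)
  have "integral (square c r) (\<lambda>y. \<bar>osc_tensor y\<bar>) = ?I 1 * ?I 2"
    unfolding square_def abs_osc_tensor integral_cbox_tensor[OF continuous continuous]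
    by (simp only: vector_minus_component vector_add_component vector_scaleR_component One_nth) simp
  also have "\<dots> \<le> (6 * (2 * r) powr \<beta>) * (6 * (2 * r) powr \<beta>)"
    using side nonneg by (intro mult_mono) auto
  also have "\<dots> = 36 * (2 powr \<beta> * 2 powr \<beta>) * (r powr \<beta> * r powr \<beta>)"
    using assms by (simp add: powr_mult)
  also have "\<dots> = 36 * 2 powr (2 * \<beta>) * r powr (2 * \<beta>)"
    by (simp only: mult_2 powr_add)
  also have "\<dots> \<le> 36 * 2 powr 2 * r powr (2 * \<beta>)"
    using \<beta> by (intro mult_right_mono mult_left_mono powr_mono) auto
  finally show ?thesis
    by simp
qed

lemma maxint_osc_tensor_le:
  assumes "0 < r" "r < 1"
  shows "maxint osc_tensor r \<le> 1296 * r powr (2 * \<beta>)"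
  unfolding maxint_def
proof (rule cSUP_least)
  fix x
  have "continuous_on UNIV (\<lambda>y. \<bar>osc_tensor y\<bar>)"
    unfolding osc_tensor_def by (intro continuous_intros continuous_on_osc)
  then have "integral\<^sup>L (lebesgue_on (tball x r)) (\<lambda>y. \<bar>osc_tensor y\<bar>) \<le> 9 * (144 * r powr (2 * \<beta>))"
    using assms integral_square_abs_osc_tensor_le by (intro integral_tball_le) simp_all
  then show "integral\<^sup>L (lebesgue_on (tball x r)) (\<lambda>y. \<bar>osc_tensor y\<bar>) \<le> 1296 * r powr (2 * \<beta>)"
    by simp
qed simp

text \<open>The exponent is chosen so that the powers of \<delta> cancel against N: with
  \<delta> = N^(1 - 1/\<beta>) one has \<delta>^(2 - p) = N.\<close>

lemma L2norm_ratio_osc_tensor: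
  "L2norm osc_tensor powr ((4 - 2 * \<beta>) / (2 - 2 * \<beta>)) / L2norm_vec osc_gradient =
    integral {0..1} (\<lambda>s. (bump' s)\<^sup>2) powr ((4 - 2 * \<beta>) / (2 - 2 * \<beta>)) /
    sqrt (2 * integral {0..1} (\<lambda>s. (bump' s)\<^sup>2) * integral {0..1} (\<lambda>s. (bump'' s)\<^sup>2))"
proof -
  define p where "p = (4 - 2 * \<beta>) / (2 - 2 * \<beta>)"
  define A B where "A = integral {0..1} (\<lambda>s. (bump' s)\<^sup>2)" and "B = integral {0..1} (\<lambda>s. (bump'' s)\<^sup>2)"
  have "(1 - 1 / \<beta>) * (2 - p) = 1"
    using \<beta> by (simp add: p_def field_simps)
  then have "\<delta> powr (2 - p) = N"
    using N_pos by (simp add: \<delta>_def powr_powr)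
  then have "\<delta>\<^sup>2 = N * \<delta> powr p"
    using \<delta>_pos by (simp add: powr_diff powr_realpow field_simps)
  then have "N / \<delta>\<^sup>2 = 1 / \<delta> powr p"
    using \<delta>_pos N_pos by (simp add: field_simps)
  moreover have "0 < A" "0 < B"
    using integral_bump'_square_pos integral_bump''_square_pos by (simp_all add: A_def B_def)
  ultimately show ?thesis
    using \<delta>_pos
    by (simp add: L2norm_osc_tensor L2norm_vec_osc_gradient powr_divide p_def[symmetric] A_def[symmetric] B_def[symmetric])
qed

end

lemma L2norm_osc_tensor_at_top:
  assumes "0 < \<beta>" "\<beta> < 1"
  shows "filterlim (\<lambda>n. L2norm (oscillation.osc_tensor (n + 2) \<beta>)) at_top sequentially"
proof -
  define A where "A = integral {0..1} (\<lambda>s. (bump' s)\<^sup>2)"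
  have "L2norm (oscillation.osc_tensor (n + 2) \<beta>) = A * (2 + real n) powr (1 / \<beta> - 1)" for n
  proof -
    interpret oscillation "n + 2" \<beta>
      using assms by unfold_locales auto
    have "real (n + 2) powr (1 / \<beta> - 1) = 1 / real (n + 2) powr (1 - 1 / \<beta>)"
      using powr_minus_divide[of "real (n + 2)" "1 - 1 / \<beta>"] by simp
    then show ?thesis
      unfolding L2norm_osc_tensor \<delta>_def A_def by (simp add: add.commute)
  qed
  moreover have "filterlim (\<lambda>n. A * (2 + real n) powr (1 / \<beta> - 1)) at_top sequentially"
    using A_def integral_bump'_square_pos
  proof (intro filterlim_tendsto_pos_mult_at_top[OF tendsto_const])
    show "filterlim (\<lambda>n. (2 + real n) powr (1 / \<beta> - 1)) at_top sequentially"
      using assms by (intro filterlim_compose[OF real_powr_at_top] filterlim_tendsto_add_at_top[OF tendsto_const filterlim_real_sequentially])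
        (auto simp: field_simps)
  qed simp
  ultimately show ?thesis
    by simp
qed

theorem proposition2p4:
  fixes \<alpha> :: real
  assumes "0 < \<alpha>" and "\<alpha> < 2"
  shows "\<exists>(f :: nat \<Rightarrow> real^2 \<Rightarrow> real) (G :: nat \<Rightarrow> real^2 \<Rightarrow> real^2) C.
     (\<forall>n\<ge>1. W1inf (f n) (G n) \<and> tint (f n) = 0) \<and>
     bdd_above {L1norm (f n) | n. n \<ge> 1} \<and>
     C > 0 \<and>
     (\<forall>r. 0 < r \<and> r < 1 \<longrightarrow> (\<forall>n\<ge>1. maxint (f n) r \<le> C * r powr \<alpha>)) \<and>
     filterlim (\<lambda>n. L2norm (f n)) at_top sequentially \<and>
     (let S = (\<lambda>n. L2norm (f n) powr ((4 - \<alpha>) / (2 - \<alpha>)) / L2norm_vec (G n)) in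
        0 < liminf (\<lambda>n. ereal (S n)) \<and> limsup (\<lambda>n. ereal (S n)) < \<infinity>)"
proof -
  define \<beta> where "\<beta> = \<alpha> / 2"
  have \<beta>: "0 < \<beta>" "\<beta> < 1" "2 * \<beta> = \<alpha>"
    using assms by (simp_all add: \<beta>_def)
  have osc: "oscillation (n + 2) \<beta>" for n
    using \<beta> by unfold_locales auto
  define f where "f n = oscillation.osc_tensor (n + 2) \<beta>" for n
  define G where "G n = oscillation.osc_gradient (n + 2) \<beta>" for n
  show ?thesis
  proof (intro exI[of _ f] exI[of _ G] exI[of _ "1296 :: real"] conjI)
    show "\<forall>n\<ge>1. W1inf (f n) (G n) \<and> tint (f n) = 0"
      using oscillation.W1inf_osc_tensor[OF osc] oscillation.tint_osc_tensor[OF osc] by (simp add: f_def G_def)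
    show "bdd_above {L1norm (f n) | n. n \<ge> 1}"
      using oscillation.L1norm_osc_tensor_le[OF osc] by (auto simp: f_def intro!: bdd_aboveI[of _ 36])
    show "\<forall>r. 0 < r \<and> r < 1 \<longrightarrow> (\<forall>n\<ge>1. maxint (f n) r \<le> 1296 * r powr \<alpha>)"
      using oscillation.maxint_osc_tensor_le[OF osc] \<beta>(3) by (simp add: f_def)
    show "filterlim (\<lambda>n. L2norm (f n)) at_top sequentially"
      unfolding f_def using \<beta>(1,2) by (rule L2norm_osc_tensor_at_top)
  qed (use oscillation.L2norm_ratio_osc_tensor[OF osc] \<beta>(3) integral_bump'_square_pos integral_bump''_square_pos
      in \<open>simp_all add: f_def G_def Let_def Liminf_const Limsup_const\<close>)
qed

end
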